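(* Let $h\ge 2$, let $k,l$ be positive integers with $k+l\le 2h-1$, and let $d_1,\dots,d_k,e_1,\dots,e_l$ be positive integers with $d_1+\dots+d_k=e_1+\dots+e_l\le h$. Then with probability $1$ the equation \[ d_1x_1+\dots+d_kx_k = e_1x_{k+1}+\dots+e_lx_{k+l} \] has only finitely many solutions $(x_1,\dots,x_{k+l})$ with $x_1,\dots,x_{k+l}$ pairwise distinct elements of $B$.
   Context: Fix an integer $h\ge 2$. Let $B$ be a random set of positive integers in which the events $\{n\in B\}$, $n=1,2,\dots$, are mutually independent and $\mathbb{P}(n\in B)=n^{-\frac{4h-3}{4h-1}}$. *)

theory Defs
  imports "HOL-Probability.Probability"
begin

text \<open>Solutions (x_1,...,x_{k+l}) encoded as lists of length k+l (x_{i+1} = xs ! i),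
  with pairwise distinct entries from the set S, of
  d_1 x_1 + ... + d_k x_k = e_1 x_{k+1} + ... + e_l x_{k+l}.
  Coefficients are indexed from 0: d 0, ..., d (k-1) and e 0, ..., e (l-1).\<close>
definition distinct_solutions ::
  "nat \<Rightarrow> nat \<Rightarrow> (nat \<Rightarrow> nat) \<Rightarrow> (nat \<Rightarrow> nat) \<Rightarrow> nat set \<Rightarrow> nat list set" where
  "distinct_solutions k l d e S =
     {xs. length xs = k + l \<and> distinct xs \<and> set xs \<subseteq> S \<and>
          (\<Sum>i<k. d i * xs ! i) = (\<Sum>j<l. e j * xs ! (k + j))}"

end

theory Submission
  imports Defs
begin

(* With probability n powr -\<alpha> for n \<in> B, \<alpha> = (4h-3)/(4h-1), the expected number of
   solutions with distinct entries in B is \<Sum> \<Prod>i x_i powr -\<alpha> over all positive solutions.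
   Since all coefficients are nonzero, any k+l-1 entries of a solution determine the last one.
   Charging each solution to its largest entry X and using X powr -\<alpha> \<le> \<Prod>i\<noteq>m x_i powr -\<alpha>/(n-1),
   with n = k+l, the sum is at most n \<zeta>(\<alpha> n/(n-1))^n, finite because \<alpha> n > n-1 for n \<le> 2h-1.
   Borel--Cantelli then gives finitely many solutions almost surely. *)

lemma sum_UN_le:
  fixes f :: "'a \<Rightarrow> 'b::ordered_comm_monoid_add"
  assumes "finite I" "\<And>i. i \<in> I \<Longrightarrow> finite (A i)" "\<And>x. f x \<ge> 0"
  shows "sum f (\<Union>i\<in>I. A i) \<le> (\<Sum>i\<in>I. sum f (A i))"
  using assms(1,2)
proof (induction I rule: finite_induct)
  case (insert i I)
  have fin: "finite (A i)" "finite (\<Union>j\<in>I. A j)" using insert by auto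
  have "sum f (A i \<union> (\<Union>j\<in>I. A j)) \<le> sum f (A i \<union> (\<Union>j\<in>I. A j)) + sum f (A i \<inter> (\<Union>j\<in>I. A j))"
    by (rule add_increasing2[OF sum_nonneg]) (use assms(3) in auto)
  also have "\<dots> = sum f (A i) + sum f (\<Union>j\<in>I. A j)"
    using sum.union_inter[OF fin] .
  also have "\<dots> \<le> sum f (A i) + (\<Sum>j\<in>I. sum f (A j))"
    using insert by (intro add_left_mono) auto
  finally show ?case using insert by simp
qed simp

lemma sum_eq_iff_single_diff:
  fixes f g :: "'a \<Rightarrow> 'b::cancel_comm_monoid_add"
  assumes "finite A" "m \<in> A" "\<And>i. i \<in> A \<Longrightarrow> i \<noteq> m \<Longrightarrow> f i = g i"
  shows "sum f A = sum g A \<longleftrightarrow> f m = g m"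
proof -
  have "sum f (A - {m}) = sum g (A - {m})" using assms(3) by (intro sum.cong) auto
  then show ?thesis using assms(1,2) by (simp add: sum.remove)
qed

lemma sum_prod_lists_length_eq:
  fixes g :: "'a \<Rightarrow> 'b::comm_semiring_1"
  shows "(\<Sum>ys\<in>{ys. set ys \<subseteq> A \<and> length ys = n}. \<Prod>i<n. g (ys!i)) = (sum g A) ^ n"
proof (induction n)
  case 0
  have "{ys. set ys \<subseteq> A \<and> length ys = 0} = {[]}" by auto
  then show ?case by simp
next
  case (Suc n)
  let ?S = "{ys. set ys \<subseteq> A \<and> length ys = n}"
  have inj: "inj_on (\<lambda>(ys, x). x # ys) (?S \<times> A)" by (auto simp: inj_on_def)
  have "(\<Sum>ys\<in>{ys. set ys \<subseteq> A \<and> length ys = Suc n}. \<Prod>i<Suc n. g (ys!i))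
      = (\<Sum>(ys, x)\<in>?S \<times> A. g x * (\<Prod>i<n. g (ys ! i)))"
    unfolding lists_length_Suc_eq
    by (subst sum.reindex[OF inj])
       (simp only: case_prod_beta comp_def prod.lessThan_Suc_shift nth_Cons_0 nth_Cons_Suc,
        simp add: case_prod_beta)
  also have "\<dots> = (\<Sum>ys\<in>?S. \<Prod>i<n. g (ys ! i)) * sum g A"
    by (simp add: sum.cartesian_product[symmetric] sum_distrib_left sum_distrib_right mult.commute)
  finally show ?case using Suc by (simp add: mult.commute)
qed

definition each_coordinate_determined :: "nat \<Rightarrow> 'a list set \<Rightarrow> bool" where
  "each_coordinate_determined n F \<longleftrightarrow>
     (\<forall>m<n. \<forall>xs\<in>F. \<forall>ys\<in>F. (\<forall>i<n. i \<noteq> m \<longrightarrow> xs ! i = ys ! i) \<longrightarrow> xs = ys)"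

lemma each_coordinate_determined_subset:
  "each_coordinate_determined n G \<Longrightarrow> F \<subseteq> G \<Longrightarrow> each_coordinate_determined n F"
  unfolding each_coordinate_determined_def by blast

lemma inj_on_list_update_if_each_coordinate_determined:
  assumes "each_coordinate_determined n F" "m < n"
  shows "inj_on (\<lambda>xs. xs[m := c]) F"
proof (rule inj_onI)
  fix xs ys assume "xs \<in> F" "ys \<in> F" "xs[m := c] = ys[m := c]"
  then have "xs ! i = ys ! i" if "i \<noteq> m" for i
    using that by (metis nth_list_update_neq)
  then show "xs = ys"
    using assms \<open>xs \<in> F\<close> \<open>ys \<in> F\<close> unfolding each_coordinate_determined_def by blast
qed

lemma prod_powr_le_prod_powr_update_max:
  fixes xs :: "nat list" and \<alpha> :: real
  assumes n2: "n \<ge> 2" and apos: "\<alpha> > 0" and len: "length xs = n" and pos: "set xs \<subseteq> {1..}"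
    and m: "m < n" and max: "\<And>i. i < n \<Longrightarrow> xs ! i \<le> xs ! m"
  shows "(\<Prod>i<n. real (xs ! i) powr - \<alpha>)
         \<le> (\<Prod>i<n. real (xs[m := 1] ! i) powr - (\<alpha> + \<alpha> / (real n - 1)))"
proof -
  define I where "I = {..<n} - {m}"
  define X where "X = real (xs ! m)"
  define \<beta> where "\<beta> = \<alpha> / (real n - 1)"
  have x1: "real (xs ! i) \<ge> 1" if "i < n" for i
    using pos len that by (metis atLeast_iff nth_mem of_nat_1 of_nat_le_iff subsetD)
  have "\<beta> > 0" using apos n2 by (simp add: \<beta>_def)
  have "X powr - \<alpha> = (X powr - \<beta>) ^ (n - 1)"
    using x1[OF m] n2 by (simp add: X_def \<beta>_def powr_realpow[symmetric] powr_powr of_nat_diff)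
  also have "\<dots> = (\<Prod>i\<in>I. X powr - \<beta>)"
    using m by (simp add: I_def)
  finally have X_split: "X powr - \<alpha> = (\<Prod>i\<in>I. X powr - \<beta>)" .
  have "(\<Prod>i<n. real (xs ! i) powr - \<alpha>) = X powr - \<alpha> * (\<Prod>i\<in>I. real (xs ! i) powr - \<alpha>)"
    unfolding I_def X_def using m by (subst prod.remove[of _ m]) auto
  also have "\<dots> = (\<Prod>i\<in>I. X powr - \<beta> * real (xs ! i) powr - \<alpha>)"
    by (simp add: X_split prod.distrib)
  also have "\<dots> \<le> (\<Prod>i\<in>I. real (xs ! i) powr - \<beta> * real (xs ! i) powr - \<alpha>)"
  proof (rule prod_mono)
    fix i assume "i \<in> I"
    then have "i < n" by (simp add: I_def)
    have "X powr - \<beta> \<le> real (xs ! i) powr - \<beta>"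
      unfolding X_def using \<open>\<beta> > 0\<close> x1[OF \<open>i < n\<close>] max[OF \<open>i < n\<close>] by (intro powr_mono2') auto
    then show "0 \<le> X powr - \<beta> * real (xs ! i) powr - \<alpha> \<and>
      X powr - \<beta> * real (xs ! i) powr - \<alpha> \<le> real (xs ! i) powr - \<beta> * real (xs ! i) powr - \<alpha>"
      by (intro conjI mult_right_mono) auto
  qed
  also have "\<dots> = (\<Prod>i\<in>I. real (xs[m := 1] ! i) powr - (\<alpha> + \<beta>))"
  proof (rule prod.cong)
    fix i assume "i \<in> I"
    then have "i < n" "i \<noteq> m" by (auto simp: I_def)
    then show "real (xs ! i) powr - \<beta> * real (xs ! i) powr - \<alpha> = real (xs[m := 1] ! i) powr - (\<alpha> + \<beta>)"
      using x1[of i] by (simp add: powr_add[symmetric] add.commute)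
  qed simp
  also have "\<dots> = (\<Prod>i<n. real (xs[m := 1] ! i) powr - (\<alpha> + \<beta>))"
    unfolding I_def using m len by (subst prod.remove[of _ m]) auto
  finally show ?thesis by (simp add: \<beta>_def)
qed

lemma sum_prod_powr_max_at_le:
  fixes F :: "nat list set" and \<alpha> :: real and n m :: nat
  defines "\<gamma> \<equiv> \<alpha> + \<alpha> / (real n - 1)"
  assumes n2: "n \<ge> 2" and apos: "\<alpha> > 0" and \<gamma>: "\<gamma> > 1" and fin: "finite F" and m: "m < n"
    and det: "each_coordinate_determined n F"
    and F: "\<And>xs. xs \<in> F \<Longrightarrow> length xs = n \<and> set xs \<subseteq> {1..} \<and> (\<forall>i<n. xs ! i \<le> xs ! m)"
  shows "(\<Sum>xs\<in>F. \<Prod>i<n. real (xs ! i) powr - \<alpha>) \<le> (\<Sum>y. real y powr - \<gamma>) ^ n"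
proof -
  define v where "v ys = (\<Prod>i<n. real (ys ! i) powr - \<gamma>)" for ys :: "nat list"
  define A where "A = insert 1 (\<Union>xs\<in>F. set xs)"
  have "(\<Sum>xs\<in>F. \<Prod>i<n. real (xs ! i) powr - \<alpha>) \<le> (\<Sum>xs\<in>F. v (xs[m := 1]))"
    unfolding v_def \<gamma>_def
    by (intro sum_mono prod_powr_le_prod_powr_update_max[OF n2 apos _ _ m]) (use F in auto)
  also have "\<dots> = (\<Sum>ys\<in>(\<lambda>xs. xs[m := 1]) ` F. v ys)"
    using inj_on_list_update_if_each_coordinate_determined[OF det m] by (simp add: sum.reindex)
  also have "\<dots> \<le> (\<Sum>ys\<in>{ys. set ys \<subseteq> A \<and> length ys = n}. v ys)"
  proof (rule sum_mono2)
    show "finite {ys. set ys \<subseteq> A \<and> length ys = n}"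
      using fin by (intro finite_lists_length_eq) (simp add: A_def)
    show "(\<lambda>xs. xs[m := 1]) ` F \<subseteq> {ys. set ys \<subseteq> A \<and> length ys = n}"
      using F set_update_subset_insert by (fastforce simp: A_def)
  qed (simp add: v_def prod_nonneg)
  also have "\<dots> = (\<Sum>y\<in>A. real y powr - \<gamma>) ^ n"
    unfolding v_def by (rule sum_prod_lists_length_eq)
  also have "\<dots> \<le> (\<Sum>y. real y powr - \<gamma>) ^ n"
    using \<gamma> fin
    by (intro power_mono sum_le_suminf sum_nonneg) (auto simp: A_def summable_real_powr_iff)
  finally show ?thesis .
qed

lemma sum_prod_powr_le_if_each_coordinate_determined:
  fixes F :: "nat list set" and \<alpha> :: real
  assumes n2: "n \<ge> 2" and apos: "\<alpha> > 0" and cond: "\<alpha> * real n > real n - 1" and fin: "finite F"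
    and det: "each_coordinate_determined n F"
    and F: "\<And>xs. xs \<in> F \<Longrightarrow> length xs = n \<and> set xs \<subseteq> {1..}"
  shows "(\<Sum>xs\<in>F. \<Prod>i<n. real (xs ! i) powr - \<alpha>)
     \<le> real n * (\<Sum>y. real y powr - (\<alpha> + \<alpha> / (real n - 1))) ^ n"
proof -
  define Fm where "Fm m = {xs\<in>F. \<forall>i<n. xs ! i \<le> xs ! m}" for m
  have "F \<subseteq> (\<Union>m<n. Fm m)"
  proof
    fix xs assume xs: "xs \<in> F"
    then have "length xs = n" using F by blast
    then have "Max (set xs) \<in> set xs" using n2 by (intro Max_in) auto
    then obtain m where "m < n" "xs ! m = Max (set xs)"
      using \<open>length xs = n\<close> by (auto simp: in_set_conv_nth)
    then show "xs \<in> (\<Union>m<n. Fm m)"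
      using xs \<open>length xs = n\<close> by (fastforce simp: Fm_def)
  qed
  then have "(\<Sum>xs\<in>F. \<Prod>i<n. real (xs ! i) powr - \<alpha>)
      \<le> (\<Sum>m<n. \<Sum>xs\<in>Fm m. \<Prod>i<n. real (xs ! i) powr - \<alpha>)"
    using fin
    by (intro order_trans[OF sum_mono2 sum_UN_le]) (auto simp: Fm_def prod_nonneg)
  also have "\<dots> \<le> (\<Sum>m<n. (\<Sum>y. real y powr - (\<alpha> + \<alpha> / (real n - 1))) ^ n)"
  proof (rule sum_mono, rule sum_prod_powr_max_at_le[OF n2 apos])
    show "\<alpha> + \<alpha> / (real n - 1) > 1" using n2 cond by (simp add: field_simps)
    fix m
    show "each_coordinate_determined n (Fm m)"
      using det by (rule each_coordinate_determined_subset) (auto simp: Fm_def)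
  qed (use fin F in \<open>auto simp: Fm_def\<close>)
  finally show ?thesis by simp
qed

lemma each_coordinate_determined_distinct_solutions:
  assumes dpos: "\<And>i. i < k \<Longrightarrow> d i > 0" and epos: "\<And>j. j < l \<Longrightarrow> e j > 0"
  shows "each_coordinate_determined (k + l) (distinct_solutions k l d e S)"
  unfolding each_coordinate_determined_def
proof (intro allI impI ballI)
  fix m xs ys
  assume m: "m < k + l" and xs: "xs \<in> distinct_solutions k l d e S"
    and ys: "ys \<in> distinct_solutions k l d e S"
    and agree: "\<forall>i<k + l. i \<noteq> m \<longrightarrow> xs ! i = ys ! i"
  let ?L = "\<lambda>zs. \<Sum>i<k. d i * zs ! i" and ?R = "\<lambda>zs. \<Sum>j<l. e j * zs ! (k + j)"
  have eqs: "?L xs = ?R xs" "?L ys = ?R ys"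
    using xs ys by (auto simp: distinct_solutions_def)
  have "xs ! m = ys ! m"
  proof (cases "m < k")
    case True
    have "?R xs = ?R ys" using agree True by (intro sum.cong) auto
    then have "?L xs = ?L ys" using eqs by simp
    then have "d m * xs ! m = d m * ys ! m"
      using sum_eq_iff_single_diff[of "{..<k}" m "\<lambda>i. d i * xs ! i" "\<lambda>i. d i * ys ! i"] agree True by auto
    then show ?thesis using dpos[OF True] by simp
  next
    case False
    then obtain j where j: "j < l" "m = k + j" using m by (metis add_diff_inverse_nat nat_add_left_cancel_less)
    have "?L xs = ?L ys" using agree False by (intro sum.cong) auto
    then have "?R xs = ?R ys" using eqs by simp
    then have "e j * xs ! m = e j * ys ! m"
      using sum_eq_iff_single_diff[of "{..<l}" j "\<lambda>j. e j * xs ! (k + j)" "\<lambda>j. e j * ys ! (k + j)"] agree j by auto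
    then show ?thesis using epos[OF j(1)] by simp
  qed
  then show "xs = ys"
    using agree xs ys by (intro nth_equalityI) (auto simp: distinct_solutions_def)
qed

lemma (in prob_space) AE_finite_occurring_events:
  fixes E :: "'i::countable \<Rightarrow> 'a set"
  assumes ev: "\<And>i. i \<in> I \<Longrightarrow> E i \<in> events"
    and bounded: "\<And>F. finite F \<Longrightarrow> F \<subseteq> I \<Longrightarrow> (\<Sum>i\<in>F. prob (E i)) \<le> C"
  shows "AE \<omega> in M. finite {i\<in>I. \<omega> \<in> E i}"
proof -
  define A where "A n = (if n \<in> to_nat ` I then E (from_nat n) else {})" for n
  have A_ev: "A n \<in> events" for n using ev by (auto simp: A_def)
  have "(\<Sum>n<N. prob (A n)) \<le> C" for N
  proof -
    define F where "F = {i\<in>I. to_nat i < N}"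
    have "{n\<in>{..<N}. n \<in> to_nat ` I} = to_nat ` F" by (auto simp: F_def)
    moreover have "finite (to_nat ` F)"
      by (rule finite_subset[of _ "{..<N}"]) (auto simp: F_def)
    ultimately have "finite F" by (simp add: finite_image_iff)
    have "(\<Sum>n<N. prob (A n)) = (\<Sum>n\<in>{n\<in>{..<N}. n \<in> to_nat ` I}. prob (E (from_nat n)))"
      unfolding A_def if_distrib measure_empty by (rule sum.inter_filter[symmetric]) simp
    also have "\<dots> = (\<Sum>i\<in>F. prob (E i))"
      unfolding \<open>{n\<in>{..<N}. n \<in> to_nat ` I} = to_nat ` F\<close> by (simp add: sum.reindex)
    also have "\<dots> \<le> C" using bounded \<open>finite F\<close> by (auto simp: F_def)
    finally show ?thesis .
  qed
  then have "summable (\<lambda>n. prob (A n))"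
    by (intro summableI_nonneg_bounded) auto
  then have "AE \<omega> in M. eventually (\<lambda>n. \<omega> \<in> space M - A n) sequentially"
    using A_ev by (intro borel_cantelli_AE1) (auto simp: less_top[symmetric])
  then show ?thesis
  proof (rule AE_mp, intro AE_I2 impI)
    fix \<omega> assume "eventually (\<lambda>n. \<omega> \<in> space M - A n) sequentially"
    then obtain N where N: "\<And>n. n \<ge> N \<Longrightarrow> \<omega> \<notin> A n" by (auto simp: eventually_sequentially)
    have "{i\<in>I. \<omega> \<in> E i} \<subseteq> from_nat ` {..<N}"
    proof
      fix i assume i: "i \<in> {i\<in>I. \<omega> \<in> E i}"
      then have "\<omega> \<in> A (to_nat i)" by (auto simp: A_def)
      then have "to_nat i < N" using N not_le by blast
      then show "i \<in> from_nat ` {..<N}" by (metis from_nat_to_nat image_eqI lessThan_iff)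
    qed
    then show "finite {i\<in>I. \<omega> \<in> E i}" by (rule finite_subset) simp
  qed
qed

lemma (in prob_space) prob_all_in_indep_events:
  assumes "indep_events (\<lambda>n. {\<omega> \<in> space M. n \<in> B \<omega>}) J"
    and p: "\<And>n. n \<in> J \<Longrightarrow> prob {\<omega> \<in> space M. n \<in> B \<omega>} = p n"
    and "distinct xs" "xs \<noteq> []" "set xs \<subseteq> J"
  shows "prob {\<omega> \<in> space M. set xs \<subseteq> B \<omega>} = (\<Prod>i<length xs. p (xs ! i))"
proof -
  have "{\<omega> \<in> space M. set xs \<subseteq> B \<omega>} = (\<Inter>n\<in>set xs. {\<omega> \<in> space M. n \<in> B \<omega>})"
    using \<open>xs \<noteq> []\<close> by (cases xs) auto
  then have "prob {\<omega> \<in> space M. set xs \<subseteq> B \<omega>} = (\<Prod>n\<in>set xs. prob {\<omega> \<in> space M. n \<in> B \<omega>})"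
    using assms unfolding indep_events_def by simp
  also have "\<dots> = (\<Prod>n\<in>set xs. p n)"
    using p \<open>set xs \<subseteq> J\<close> by (intro prod.cong) auto
  also have "\<dots> = (\<Prod>i<length xs. p (xs ! i))"
    using \<open>distinct xs\<close>
    by (simp add: prod.distinct_set_conv_list prod.list_conv_set_nth atLeast0LessThan)
  finally show ?thesis .
qed

lemma exponent_gt:
  fixes h n :: nat
  assumes "n + 1 \<le> 2 * h"
  shows "(4 * real h - 3) / (4 * real h - 1) * real n > real n - 1"
proof -
  have "2 * real n + 2 \<le> 4 * real h" using assms by linarith
  then show ?thesis by (simp add: field_simps)
qed

theorem lemma8:
  fixes M :: "'w measure" and B :: "'w \<Rightarrow> nat set"
    and h k l :: nat and d e :: "nat \<Rightarrow> nat"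
  assumes "prob_space M"
    and pos: "\<And>\<omega>. \<omega> \<in> space M \<Longrightarrow> 0 \<notin> B \<omega>"
    and meas: "\<And>n. {\<omega> \<in> space M. n \<in> B \<omega>} \<in> sets M"
    and indep: "prob_space.indep_events M (\<lambda>n. {\<omega> \<in> space M. n \<in> B \<omega>}) {1..}"
    and probs: "\<And>n. n \<ge> 1 \<Longrightarrow>
       measure M {\<omega> \<in> space M. n \<in> B \<omega>} = real n powr (- ((4 * real h - 3) / (4 * real h - 1)))"
    and h: "h \<ge> 2"
    and kl: "k \<ge> 1" "l \<ge> 1" "k + l \<le> 2 * h - 1"
    and dpos: "\<And>i. i < k \<Longrightarrow> d i > 0"
    and epos: "\<And>j. j < l \<Longrightarrow> e j > 0"
    and sums: "(\<Sum>i<k. d i) = (\<Sum>j<l. e j)" "(\<Sum>i<k. d i) \<le> h"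
  shows "AE \<omega> in M. finite (distinct_solutions k l d e (B \<omega>))"
proof -
  interpret prob_space M by fact
  define \<alpha> where "\<alpha> = (4 * real h - 3) / (4 * real h - 1)"
  define n where "n = k + l"
  define Sol where "Sol = distinct_solutions k l d e {1..}"
  define E where "E xs = {\<omega> \<in> space M. set xs \<subseteq> B \<omega>}" for xs :: "nat list"
  have n2: "n \<ge> 2" using kl by (simp add: n_def)
  have Sol: "length xs = n \<and> set xs \<subseteq> {1..} \<and> distinct xs \<and> xs \<noteq> []" if "xs \<in> Sol" for xs
    using that n2 by (auto simp: Sol_def n_def distinct_solutions_def)
  have prob_E: "prob (E xs) = (\<Prod>i<n. real (xs ! i) powr - \<alpha>)" if "xs \<in> Sol" for xs
    unfolding E_def \<alpha>_def using Sol[OF that] probs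
    by (subst prob_all_in_indep_events[OF indep]) auto
  have "AE \<omega> in M. finite {xs \<in> Sol. \<omega> \<in> E xs}"
  proof (rule AE_finite_occurring_events)
    show "E xs \<in> events" for xs
      unfolding E_def subset_eq using meas by (intro sets.sets_Collect_finite_All) auto
    fix F assume "finite F" "F \<subseteq> Sol"
    have "(\<Sum>xs\<in>F. prob (E xs)) = (\<Sum>xs\<in>F. \<Prod>i<n. real (xs ! i) powr - \<alpha>)"
      using prob_E \<open>F \<subseteq> Sol\<close> by (intro sum.cong) auto
    also have "\<dots> \<le> real n * (\<Sum>y. real y powr - (\<alpha> + \<alpha> / (real n - 1))) ^ n"
    proof (rule sum_prod_powr_le_if_each_coordinate_determined[OF n2 _ _ \<open>finite F\<close>])
      show "\<alpha> > 0" "\<alpha> * real n > real n - 1"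
        using h kl exponent_gt[of n h] by (auto simp: \<alpha>_def n_def)
      show "each_coordinate_determined n F"
        using each_coordinate_determined_distinct_solutions[OF dpos epos] \<open>F \<subseteq> Sol\<close>
        unfolding Sol_def n_def by (rule each_coordinate_determined_subset)
    qed (use Sol \<open>F \<subseteq> Sol\<close> in auto)
    finally show "(\<Sum>xs\<in>F. prob (E xs)) \<le> \<dots>" .
  qed
  then show ?thesis
  proof (rule AE_mp, intro AE_I2 impI)
    fix \<omega> assume \<omega>: "\<omega> \<in> space M" and fin: "finite {xs \<in> Sol. \<omega> \<in> E xs}"
    have "distinct_solutions k l d e (B \<omega>) \<subseteq> {xs \<in> Sol. \<omega> \<in> E xs}"
      using pos[OF \<omega>] \<omega>
      by (auto simp: distinct_solutions_def Sol_def E_def Suc_le_eq) (metis gr0I subsetD)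
    then show "finite (distinct_solutions k l d e (B \<omega>))" using fin by (rule finite_subset)
  qed
qed

end
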